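(* Let $F:\mathcal{S}^{n\times n}\to\mathbb{R}$, $\boldsymbol{G}:\mathcal{S}^{n\times n}\to\mathbb{R}^q$, and let $\mathcal{C}\subseteq\mathbb{R}^n$ be closed. Consider the problems (P1) $\min F(\boldsymbol{X})$ subject to $\boldsymbol{G}(\boldsymbol{X})=\boldsymbol{0}$, $\boldsymbol{\lambda}(\boldsymbol{X})\in\mathcal{C}$, $\boldsymbol{X}\in\mathcal{S}^{n\times n}$; (P2) $\min f(\boldsymbol{Q},\boldsymbol{\lambda}):=F(\boldsymbol{Q}\operatorname{Diag}(\boldsymbol{\lambda})\boldsymbol{Q}^\top)$ subject to $\boldsymbol{G}(\boldsymbol{Q}\operatorname{Diag}(\boldsymbol{\lambda})\boldsymbol{Q}^\top)=\boldsymbol{0}$, $\boldsymbol{\lambda}\in\mathcal{C}$, $(\boldsymbol{Q},\boldsymbol{\lambda})\in\mathcal{O}(n,n)\times\mathbb{R}^n_\geq$. A matrix $\boldsymbol{X}^*\in\mathcal{S}^{n\times n}$ with pairwise distinct eigenvalues is a local minimum of (P1) if and only if one of its spectral decompositions $(\boldsymbol{Q}^*,\boldsymbol{\lambda}(\boldsymbol{X}^* ))$ (i.e. $\boldsymbol{Q}^*\in\mathcal{O}(n,n)$ with $\boldsymbol{X}^*=\boldsymbol{Q}^*\operatorname{Diag}(\boldsymbol{\lambda}(\boldsymbol{X}^* ))\boldsymbol{Q}^{*\top}$) is a local minimum of (P2). Furthermore, if one spectral decomposition of $\boldsymbol{X}^*$ is a local minimum of (P2), then all of its spectral decompositions are local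 minima of (P2).
   Context: $\mathcal{S}^{n\times n}$: real symmetric $n\times n$ matrices; $\mathcal{O}(n,n)$: real orthogonal $n\times n$ matrices; $\boldsymbol{\lambda}(\boldsymbol{X})$: eigenvalues of $\boldsymbol{X}$ in nonincreasing order; $\mathbb{R}^n_{\geq}=\{\boldsymbol{x}\in\mathbb{R}^n:x_1\ge\cdots\ge x_n\}$. Feasible sets: $\mathcal{X}_1=\{\boldsymbol{X}\in\mathcal{S}^{n\times n}:\boldsymbol{G}(\boldsymbol{X})=\boldsymbol{0},\ \boldsymbol{\lambda}(\boldsymbol{X})\in\mathcal{C}\}$ and $\mathcal{X}_2=\{(\boldsymbol{Q},\boldsymbol{\lambda})\in\mathcal{O}(n,n)\times\mathbb{R}^n_\geq:\boldsymbol{G}(\boldsymbol{Q}\operatorname{Diag}(\boldsymbol{\lambda})\boldsymbol{Q}^\top)=\boldsymbol{0},\ \boldsymbol{\lambda}\in\mathcal{C}\}$. $\boldsymbol{X}^*$ is a local minimum of (P1) if $\boldsymbol{X}^*\in\mathcal{X}_1$ and there is $\delta_1>0$ with $F(\boldsymbol{X}^* )\le F(\boldsymbol{X})$ for all $\boldsymbol{X}\in\mathcal{X}_1$ with $\|\boldsymbol{X}-\boldsymbol{X}^*\|_F\le\delta_1$. $(\boldsymbol{Q}^*,\boldsymbol{\lambda}^* )$ is a local minimum of (P2) if $(\boldsymbol{Q}^*,\boldsymbol{\lambda}^* )\in\mathcal{X}_2$ and there is $\delta_2>0$ with $f(\boldsymbol{Q}^*,\boldsymbol{\lambda}^* )\le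 f(\boldsymbol{Q},\boldsymbol{\lambda})$ for all $(\boldsymbol{Q},\boldsymbol{\lambda})\in\mathcal{X}_2$ with $\|\boldsymbol{Q}-\boldsymbol{Q}^*\|_F\le\delta_2$ and $\|\boldsymbol{\lambda}-\boldsymbol{\lambda}^*\|\le\delta_2$. *)

theory Defs
  imports "HOL-Analysis.Analysis" "HOL-Computational_Algebra.Polynomial"
begin

type_synonym 'n rvec = "(real, 'n) vec"
type_synonym 'n rmat = "((real, 'n) vec, 'n) vec"

(* Matrices in S^{n x n} are 'n rmat with transpose X = X; the index type 'n is
   finite and well-ordered so that "nonincreasing order" of eigenvalues makes sense.
   The Frobenius norm is the library norm on 'n rmat. *)

definition sym_mat :: "'n::finite rmat \<Rightarrow> bool" where
  "sym_mat X \<longleftrightarrow> transpose X = X"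

definition Diag :: "'n::finite rvec \<Rightarrow> 'n rmat" where
  "Diag v = (\<chi> i j. if i = j then v $ i else 0)"

definition charpoly :: "'n::finite rmat \<Rightarrow> real poly" where
  "charpoly X = det (\<chi> i j. (if i = j then [:0, 1:] else 0) - [:X $ i $ j:])"

definition nonincr :: "'n::{finite,wellorder} rvec \<Rightarrow> bool" where
  "nonincr v \<longleftrightarrow> (\<forall>i j. i \<le> j \<longrightarrow> v $ j \<le> v $ i)"

definition eigvals :: "'n::{finite,wellorder} rmat \<Rightarrow> 'n rvec" where
  "eigvals X = (THE v. nonincr v \<and> image_mset (\<lambda>i. v $ i) (mset_set UNIV) = proots (charpoly X))"

definition feas1 :: "('n rmat \<Rightarrow> 'q::finite rvec) \<Rightarrow> ('n::{finite,wellorder} rvec) set \<Rightarrow> ('n rmat) set" where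
  "feas1 G C = {X. sym_mat X \<and> G X = 0 \<and> eigvals X \<in> C}"

definition feas2 :: "('n rmat \<Rightarrow> 'q::finite rvec) \<Rightarrow> ('n::{finite,wellorder} rvec) set
                     \<Rightarrow> ('n rmat \<times> 'n rvec) set" where
  "feas2 G C = {(Q, l). orthogonal_matrix Q \<and> nonincr l \<and>
                        G (Q ** Diag l ** transpose Q) = 0 \<and> l \<in> C}"

definition local_min_P1 :: "('n rmat \<Rightarrow> real) \<Rightarrow> ('n rmat \<Rightarrow> 'q::finite rvec)
     \<Rightarrow> ('n::{finite,wellorder} rvec) set \<Rightarrow> 'n rmat \<Rightarrow> bool" where
  "local_min_P1 F G C Xs \<longleftrightarrow> Xs \<in> feas1 G C \<and>
     (\<exists>d1>0. \<forall>X\<in>feas1 G C. norm (X - Xs) \<le> d1 \<longrightarrow> F Xs \<le> F X)"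

definition local_min_P2 :: "('n rmat \<Rightarrow> real) \<Rightarrow> ('n rmat \<Rightarrow> 'q::finite rvec)
     \<Rightarrow> ('n::{finite,wellorder} rvec) set \<Rightarrow> 'n rmat \<Rightarrow> 'n rvec \<Rightarrow> bool" where
  "local_min_P2 F G C Qs ls \<longleftrightarrow> (Qs, ls) \<in> feas2 G C \<and>
     (\<exists>d2>0. \<forall>(Q, l)\<in>feas2 G C. norm (Q - Qs) \<le> d2 \<and> norm (l - ls) \<le> d2 \<longrightarrow>
        F (Qs ** Diag ls ** transpose Qs) \<le> F (Q ** Diag l ** transpose Q))"

definition spectral_decomp :: "'n rmat \<Rightarrow> 'n::{finite,wellorder} rmat \<Rightarrow> bool" where
  "spectral_decomp Q X \<longleftrightarrow> orthogonal_matrix Q \<and> X = Q ** Diag (eigvals X) ** transpose Q"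

end

theory Submission
  imports Defs
begin

(*
  If X* has simple spectrum, its eigenvector matrix is determined up to the signs of its
  columns: P Diag(l) P^T = Q Diag(l) Q^T with distinct entries of l forces Q^T P to be a
  diagonal orthogonal matrix.  Since (Q, l) |-> Q Diag(l) Q^T is continuous and maps the
  feasible set of (P2) into that of (P1), a local minimum of (P1) yields local minima of (P2)
  at every spectral decomposition.  Conversely, by compactness of the orthogonal group, a
  limit of spectral decompositions of matrices X_k -> X* is a spectral decomposition of X*;
  after correcting column signs along the sequence, matrices near X* have spectral
  decompositions near any prescribed one of X*, which turns a local minimum of (P2) into
  one of (P1).  Existence of sorted spectral decompositions comes from the variational
  characterisation: successive maximisers of the Rayleigh quotient on orthogonal
  complements are eigenvectors with nonincreasing eigenvalues.
*)

section \<open>Sorted spectral decompositions via the Rayleigh quotient\<close>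

lemma linear_coeff_zero_if_quadratic_nonpos:
  fixes s c :: real
  assumes "s \<ge> 0" and "\<forall>t. 2 * t * s + t\<^sup>2 * c \<le> 0"
  shows "s = 0"
proof (rule ccontr)
  assume "s \<noteq> 0"
  with assms(1) have s: "s > 0" by simp
  define t where "t = s / (\<bar>c\<bar> + 1)"
  have t: "t > 0" using s by (simp add: t_def)
  have "t * (2 * s + t * c) \<le> 0"
    using assms(2)[rule_format, of t] by (simp add: power2_eq_square algebra_simps)
  then have "2 * s + t * c \<le> 0" using t by (simp add: mult_le_0_iff)
  moreover have "t * \<bar>c\<bar> < s" using s by (simp add: t_def field_simps)
  moreover have "- (t * \<bar>c\<bar>) \<le> t * c" using t mult_left_mono[of "- \<bar>c\<bar>" c t] by simp
  ultimately show False using s by linarith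
qed

lemma symmetric_matrix_inner:
  fixes A :: "real^'n^'n"
  assumes "transpose A = A"
  shows "(A *v x) \<bullet> y = x \<bullet> (A *v y)"
  by (metis assms dot_lmul_matrix vector_transpose_matrix)

lemma rayleigh_max_exists:
  fixes A :: "real^'n^'n"
  assumes "subspace W" and "W \<noteq> {0}"
  obtains x where "x \<in> W" "norm x = 1" "\<forall>y\<in>W. y \<bullet> (A *v y) \<le> (x \<bullet> (A *v x)) * (y \<bullet> y)"
proof -
  define S where "S = W \<inter> sphere 0 1"
  have "compact S"
    unfolding S_def using closed_subspace[OF assms(1)]
    by (simp add: compact_eq_bounded_closed closed_Int bounded_Int)
  obtain a where a: "a \<in> W" "a \<noteq> 0" using assms(2) subspace_0[OF assms(1)] by blast
  then have "a /\<^sub>R norm a \<in> S" using assms(1) by (simp add: S_def subspace_scale)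
  then have "S \<noteq> {}" by blast
  moreover have "continuous_on S (\<lambda>x. x \<bullet> (A *v x))"
    by (intro continuous_intros matrix_vector_mult_linear_continuous_on)
  ultimately obtain x where x: "x \<in> S" "\<forall>y\<in>S. y \<bullet> (A *v y) \<le> x \<bullet> (A *v x)"
    using continuous_attains_sup[OF \<open>compact S\<close>] by blast
  have "y \<bullet> (A *v y) \<le> (x \<bullet> (A *v x)) * (y \<bullet> y)" if "y \<in> W" for y
  proof (cases "y = 0")
    case False
    then have "y /\<^sub>R norm y \<in> S" using that assms(1) by (simp add: S_def subspace_scale)
    then have "(y /\<^sub>R norm y) \<bullet> (A *v (y /\<^sub>R norm y)) \<le> x \<bullet> (A *v x)" using x(2) by blast
    then show ?thesis using False
      by (simp add: matrix_vector_mult_scaleR power2_norm_eq_inner[symmetric] power2_eq_square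
          field_simps)
  qed simp
  with x(1) show thesis using that by (auto simp: S_def)
qed

lemma rayleigh_max_is_eigenvector:
  fixes A :: "real^'n^'n"
  assumes sym: "transpose A = A"
    and W: "subspace W" "\<forall>y\<in>W. A *v y \<in> W"
    and x: "x \<in> W" "norm x = 1"
    and max: "\<forall>y\<in>W. y \<bullet> (A *v y) \<le> (x \<bullet> (A *v x)) * (y \<bullet> y)"
  shows "A *v x = (x \<bullet> (A *v x)) *\<^sub>R x"
proof -
  define m where "m = x \<bullet> (A *v x)"
  define v where "v = A *v x - m *\<^sub>R x"
  have xx: "x \<bullet> x = 1" using x(2) by (simp add: power2_norm_eq_inner[symmetric])
  have vW: "v \<in> W" using W x(1) by (simp add: v_def subspace_diff subspace_scale)
  have xv: "x \<bullet> v = 0" using xx by (simp add: v_def m_def inner_diff_right)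
  have vAx: "v \<bullet> (A *v x) = v \<bullet> v"
    using xv by (simp add: v_def inner_diff_left inner_diff_right inner_commute)
  have xAv: "x \<bullet> (A *v v) = v \<bullet> (A *v x)"
    using symmetric_matrix_inner[OF sym, of x v] by (simp add: inner_commute)
  have "2 * t * (v \<bullet> v) + t\<^sup>2 * (v \<bullet> (A *v v) - m * (v \<bullet> v)) \<le> 0" for t
  proof -
    have "x + t *\<^sub>R v \<in> W" using W(1) x(1) vW by (simp add: subspace_add subspace_scale)
    then have "(x + t *\<^sub>R v) \<bullet> (A *v (x + t *\<^sub>R v)) \<le> m * ((x + t *\<^sub>R v) \<bullet> (x + t *\<^sub>R v))"
      using max m_def by blast
    then show ?thesis
      using vAx xAv xx xv
      by (simp add: matrix_vector_right_distrib matrix_vector_mult_scaleR inner_add_left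
          inner_add_right inner_commute m_def power2_eq_square algebra_simps)
  qed
  then have "v \<bullet> v = 0" by (intro linear_coeff_zero_if_quadratic_nonpos) auto
  then show ?thesis by (simp add: v_def m_def)
qed

lemma exists_nonzero_orthogonal:
  fixes S :: "(real^'n) set"
  assumes "finite S" "card S < CARD('n)"
  obtains a where "a \<noteq> 0" "\<forall>x\<in>S. x \<bullet> a = 0"
proof -
  have "span S \<noteq> UNIV"
  proof
    assume "span S = UNIV"
    then have "CARD('n) \<le> card S" using dim_le_card[of UNIV S] assms(1) by simp
    with assms(2) show False by simp
  qed
  then obtain a where "a \<noteq> 0" and a: "\<forall>x\<in>span S. a \<bullet> x = 0"
    using span_not_UNIV_orthogonal by blast
  moreover have "\<forall>x\<in>S. x \<bullet> a = 0"
    using a span_base inner_commute by metis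
  ultimately show thesis using that by blast
qed

definition rayleigh_sequence :: "real^'n^'n \<Rightarrow> (nat \<Rightarrow> real^'n) \<Rightarrow> (nat \<Rightarrow> real) \<Rightarrow> nat \<Rightarrow> bool"
  where "rayleigh_sequence A u \<mu> k \<longleftrightarrow> (\<forall>i<k. norm (u i) = 1 \<and> A *v u i = \<mu> i *\<^sub>R u i
     \<and> (\<forall>j<i. u j \<bullet> u i = 0)
     \<and> (\<forall>x. (\<forall>j<i. u j \<bullet> x = 0) \<longrightarrow> x \<bullet> (A *v x) \<le> \<mu> i * (x \<bullet> x)))"

lemma rayleigh_sequence_exists:
  fixes A :: "real^'n^'n"
  assumes sym: "transpose A = A"
  shows "k \<le> CARD('n) \<Longrightarrow> \<exists>u \<mu>. rayleigh_sequence A u \<mu> k"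
proof (induction k)
  case 0
  show ?case by (simp add: rayleigh_sequence_def)
next
  case (Suc k)
  then obtain u \<mu> where IH: "rayleigh_sequence A u \<mu> k"
    by (metis Suc_leD)
  define W where "W = {y. \<forall>x\<in>u ` {..<k}. orthogonal x y}"
  have W_iff: "y \<in> W \<longleftrightarrow> (\<forall>j<k. u j \<bullet> y = 0)" for y by (auto simp: W_def orthogonal_def)
  have "subspace W" unfolding W_def by (rule subspace_orthogonal_to_vectors)
  have "card (u ` {..<k}) < CARD('n)"
    using card_image_le[of "{..<k}" u] Suc.prems by simp
  then obtain a where "a \<noteq> 0" "\<forall>x\<in>u ` {..<k}. x \<bullet> a = 0"
    using exists_nonzero_orthogonal[OF finite_imageI[OF finite_lessThan]] by blast
  then have "W \<noteq> {0}" by (auto simp: W_iff)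
  have invariant: "\<forall>y\<in>W. A *v y \<in> W"
  proof
    fix y assume "y \<in> W"
    have "u j \<bullet> (A *v y) = 0" if "j < k" for j
    proof -
      have "u j \<bullet> (A *v y) = (A *v u j) \<bullet> y" using symmetric_matrix_inner[OF sym] by simp
      also have "\<dots> = 0" using IH that \<open>y \<in> W\<close> by (simp add: rayleigh_sequence_def W_iff)
      finally show ?thesis .
    qed
    then show "A *v y \<in> W" by (simp add: W_iff)
  qed
  obtain x where x: "x \<in> W" "norm x = 1"
    and max: "\<forall>y\<in>W. y \<bullet> (A *v y) \<le> (x \<bullet> (A *v x)) * (y \<bullet> y)"
    using rayleigh_max_exists[OF \<open>subspace W\<close> \<open>W \<noteq> {0}\<close>] by blast
  have "A *v x = (x \<bullet> (A *v x)) *\<^sub>R x"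
    by (rule rayleigh_max_is_eigenvector[OF sym \<open>subspace W\<close> invariant x max])
  with IH x max have "rayleigh_sequence A (u(k := x)) (\<mu>(k := x \<bullet> (A *v x))) (Suc k)"
    by (auto simp: rayleigh_sequence_def W_iff less_Suc_eq)
  then show ?case by blast
qed

lemma rayleigh_sequence_orthogonal:
  assumes "rayleigh_sequence A u \<mu> k" "a \<noteq> b" "a < k" "b < k"
  shows "u a \<bullet> u b = 0"
  using assms unfolding rayleigh_sequence_def by (metis inner_commute linorder_neqE_nat)

lemma rayleigh_sequence_antimono:
  assumes "rayleigh_sequence A u \<mu> k" "a < b" "b < k"
  shows "\<mu> b \<le> \<mu> a"
proof -
  have ub: "u b \<bullet> u b = 1"
    using assms by (simp add: rayleigh_sequence_def power2_norm_eq_inner[symmetric])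
  have "\<mu> b = u b \<bullet> (A *v u b)" using assms ub by (simp add: rayleigh_sequence_def)
  also have "\<dots> \<le> \<mu> a * (u b \<bullet> u b)"
  proof -
    have "\<forall>j<a. u j \<bullet> u b = 0" using assms by (auto simp: rayleigh_sequence_def)
    moreover have "a < k" using assms by simp
    ultimately show ?thesis using assms(1) unfolding rayleigh_sequence_def by blast
  qed
  finally show ?thesis using ub by simp
qed

definition ord_index :: "'n::{finite,wellorder} \<Rightarrow> nat" where
  "ord_index i = card {j. j < i}"

lemma strict_mono_ord_index: "strict_mono (ord_index :: 'n::{finite,wellorder} \<Rightarrow> nat)"
  by (rule strict_monoI) (auto simp: ord_index_def intro: psubset_card_mono)

lemma ord_index_less_card [simp]: "ord_index (i::'n::{finite,wellorder}) < CARD('n)"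
  unfolding ord_index_def by (rule psubset_card_mono) auto

lemma matrix_mult_eigenvector_columns:
  fixes X P :: "real^'n^'n"
  assumes "\<forall>c. X *v column c P = l $ c *\<^sub>R column c P"
  shows "X ** P = P ** Diag l"
proof -
  have "(X ** P) $ r $ c = (P ** Diag l) $ r $ c" for r c
  proof -
    have "(X ** P) $ r $ c = (X *v column c P) $ r"
      by (simp add: matrix_matrix_mult_def matrix_vector_mult_def column_def)
    also have "\<dots> = (P ** Diag l) $ r $ c"
      using assms by (simp add: matrix_matrix_mult_def Diag_def column_def if_distrib if_distribR
          sum.delta' mult.commute cong: if_cong)
    finally show ?thesis .
  qed
  then show ?thesis by (simp add: vec_eq_iff)
qed

lemma symmetric_sorted_diagonalization:
  fixes X :: "'n::{finite,wellorder} rmat"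
  assumes "sym_mat X"
  obtains P l where "orthogonal_matrix P" "nonincr l" "X = P ** Diag l ** transpose P"
proof -
  obtain u \<mu> where u: "rayleigh_sequence X u \<mu> CARD('n)"
    using rayleigh_sequence_exists[of X "CARD('n)"] assms by (auto simp: sym_mat_def)
  define P :: "'n rmat" where "P = (\<chi> r c. u (ord_index c) $ r)"
  define l :: "'n rvec" where "l = (\<chi> c. \<mu> (ord_index c))"
  have col: "column c P = u (ord_index c)" for c by (simp add: P_def column_def vec_eq_iff)
  have "orthogonal_matrix P"
    unfolding orthogonal_matrix_orthonormal_columns col orthogonal_def
  proof (intro conjI allI impI)
    fix i j :: 'n
    assume "i \<noteq> j"
    then show "u (ord_index i) \<bullet> u (ord_index j) = 0"
      by (intro rayleigh_sequence_orthogonal[OF u])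
        (simp_all add: strict_mono_eq[OF strict_mono_ord_index])
  qed (use u in \<open>simp add: rayleigh_sequence_def\<close>)
  moreover have "X ** P = P ** Diag l"
  proof (rule matrix_mult_eigenvector_columns, rule allI)
    fix c
    show "X *v column c P = l $ c *\<^sub>R column c P"
      using u by (simp add: rayleigh_sequence_def col l_def)
  qed
  then have "X = P ** Diag l ** transpose P"
    using \<open>orthogonal_matrix P\<close>
    by (metis matrix_mul_assoc matrix_mul_rid orthogonal_matrix_def)
  moreover have "nonincr l"
    using rayleigh_sequence_antimono[OF u]
    by (auto simp: nonincr_def l_def order_le_less strict_mono_less[OF strict_mono_ord_index])
  ultimately show thesis using that by blast
qed

section \<open>Eigenvalues of a conjugated diagonal matrix\<close>

lemma matrix_diff_ldistrib: "(A::'a::ring_1^'n^'m) ** (B - C) = A ** B - A ** C"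
  by (simp add: matrix_matrix_mult_def vec_eq_iff sum_subtractf algebra_simps)

lemma matrix_diff_rdistrib: "((B - C)::'a::ring_1^'n^'m) ** (A::'a^'p^'n) = B ** A - C ** A"
  by (simp add: matrix_matrix_mult_def vec_eq_iff sum_subtractf algebra_simps)

lemma mat_matrix_mult_commute: "mat (c::'a::comm_semiring_1) ** A = A ** mat c"
  by (simp add: matrix_matrix_mult_def mat_def vec_eq_iff if_distrib if_distribR
      sum.delta sum.delta' mult.commute cong: if_cong)

lemma map_matrix_const_poly_mult:
  "map_matrix (\<lambda>a. [:a:]) (A ** B) = map_matrix (\<lambda>a. [:a:]) A ** map_matrix (\<lambda>a. [:a:]) B"
  by (simp add: matrix_matrix_mult_def vec_eq_iff mult_to_poly sum_to_poly mult_ac)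

lemma charpoly_eq_det: "charpoly X = det (mat [:0, 1:] - map_matrix (\<lambda>a. [:a:]) X)"
  unfolding charpoly_def by (rule arg_cong[where f = det]) (simp add: mat_def vec_eq_iff)

lemma charpoly_similar:
  fixes Q X Q' :: "'n::finite rmat"
  assumes "Q ** Q' = mat 1"
  shows "charpoly (Q ** X ** Q') = charpoly X"
proof -
  let ?p = "map_matrix (\<lambda>a. [:a:]) :: 'n rmat \<Rightarrow> _"
  have "?p (mat 1) = mat 1" by (simp add: mat_def vec_eq_iff)
  then have pQQ': "?p Q ** ?p Q' = mat 1"
    by (metis assms map_matrix_const_poly_mult)
  have "?p Q ** mat [:0, 1:] ** ?p Q' = mat [:0, 1:]"
    by (metis pQQ' mat_matrix_mult_commute matrix_mul_assoc matrix_mul_rid)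
  then have "mat [:0, 1:] - ?p (Q ** X ** Q') = ?p Q ** (mat [:0, 1:] - ?p X) ** ?p Q'"
    by (simp add: map_matrix_const_poly_mult matrix_diff_ldistrib matrix_diff_rdistrib
        matrix_mul_assoc)
  then have "charpoly (Q ** X ** Q') = det (?p Q) * charpoly X * det (?p Q')"
    by (simp add: charpoly_eq_det det_mul)
  also have "\<dots> = det (?p Q ** ?p Q') * charpoly X"
    by (simp add: det_mul algebra_simps)
  finally show ?thesis using pQQ' by simp
qed

lemma image_mset_mset_set_eq_sum: "finite A \<Longrightarrow> image_mset f (mset_set A) = (\<Sum>i\<in>A. {#f i#})"
  by (induction A rule: finite_induct) auto

lemma charpoly_Diag: "charpoly (Diag l) = (\<Prod>i\<in>UNIV. [:- (l $ i), 1:])"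
  unfolding charpoly_eq_det by (subst det_diagonal) (auto simp: mat_def Diag_def)

lemma proots_charpoly_Diag: "proots (charpoly (Diag l)) = image_mset (\<lambda>i. l $ i) (mset_set UNIV)"
proof -
  have "proots (charpoly (Diag l)) = (\<Sum>i\<in>UNIV. {# l $ i #})"
    unfolding charpoly_Diag by (subst proots_prod) auto
  also have "\<dots> = image_mset (\<lambda>i. l $ i) (mset_set UNIV)"
    by (simp add: image_mset_mset_set_eq_sum)
  finally show ?thesis .
qed

lemma nonincr_eq_if_mset_eq:
  fixes v w :: "'n::{finite,wellorder} rvec"
  assumes "nonincr v" "nonincr w"
    and "image_mset (\<lambda>i. v $ i) (mset_set UNIV) = image_mset (\<lambda>i. w $ i) (mset_set UNIV)"
  shows "v = w"
proof -
  define xs where "xs = sorted_list_of_set (UNIV :: 'n set)"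
  have "sorted xs" "set xs = UNIV" "mset_set UNIV = mset xs"
    unfolding xs_def by (auto simp: mset_set_set[symmetric])
  have sorted_rev: "sorted (rev (map (\<lambda>i. u $ i) xs))" if "nonincr u" for u :: "'n rvec"
  proof -
    have "sorted_wrt (\<lambda>a b. b \<le> a) (map (\<lambda>i. u $ i) xs)"
      using \<open>sorted xs\<close> that unfolding nonincr_def sorted_wrt_map
      by (metis (mono_tags, lifting) sorted_wrt_mono_rel)
    then show ?thesis by (simp add: sorted_wrt_rev)
  qed
  have "mset (rev (map (\<lambda>i. v $ i) xs)) = mset (rev (map (\<lambda>i. w $ i) xs))"
    using assms(3) unfolding \<open>mset_set UNIV = mset xs\<close> by simp
  then have "rev (map (\<lambda>i. v $ i) xs) = rev (map (\<lambda>i. w $ i) xs)"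
    using properties_for_sort sorted_rev assms(1,2) by metis
  then show ?thesis using \<open>set xs = UNIV\<close> by (simp add: vec_eq_iff map_eq_conv)
qed

lemma eigvals_orthogonal_conj:
  fixes Q :: "'n::{finite,wellorder} rmat"
  assumes "orthogonal_matrix Q" "nonincr l"
  shows "eigvals (Q ** Diag l ** transpose Q) = l"
proof -
  have "proots (charpoly (Q ** Diag l ** transpose Q)) = image_mset (\<lambda>i. l $ i) (mset_set UNIV)"
    using assms(1) by (simp add: orthogonal_matrix_def charpoly_similar proots_charpoly_Diag)
  then show ?thesis
    unfolding eigvals_def using assms(2) by (auto intro: nonincr_eq_if_mset_eq)
qed

lemma spectral_decomp_exists:
  assumes "sym_mat X"
  obtains Q where "spectral_decomp Q X"
  using symmetric_sorted_diagonalization[OF assms] eigvals_orthogonal_conj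
  unfolding spectral_decomp_def by metis

lemma spectral_decompD:
  assumes "spectral_decomp Q X"
  shows "orthogonal_matrix Q" "Q ** Diag (eigvals X) ** transpose Q = X"
  using assms unfolding spectral_decomp_def by metis+

lemma spectral_decompI:
  "orthogonal_matrix Q \<Longrightarrow> Q ** Diag (eigvals X) ** transpose Q = X \<Longrightarrow> spectral_decomp Q X"
  unfolding spectral_decomp_def by simp

lemma nonincr_eigvals: "sym_mat X \<Longrightarrow> nonincr (eigvals X)"
  using symmetric_sorted_diagonalization eigvals_orthogonal_conj by metis

section \<open>Convergence of spectral decompositions\<close>

lemma tendsto_matrix_mult [tendsto_intros]:
  fixes f :: "'a \<Rightarrow> real^'n^'m" and g :: "'a \<Rightarrow> real^'p^'n"
  assumes "(f \<longlongrightarrow> A) F" "(g \<longlongrightarrow> B) F"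
  shows "((\<lambda>x. f x ** g x) \<longlongrightarrow> A ** B) F"
  unfolding matrix_matrix_mult_def
  by (intro tendsto_vec_lambda tendsto_sum tendsto_mult tendsto_vec_nth assms)

lemma tendsto_transpose [tendsto_intros]:
  fixes f :: "'a \<Rightarrow> real^'n^'m"
  assumes "(f \<longlongrightarrow> A) F"
  shows "((\<lambda>x. transpose (f x)) \<longlongrightarrow> transpose A) F"
  unfolding transpose_def by (intro tendsto_vec_lambda tendsto_vec_nth assms)

lemma tendsto_Diag [tendsto_intros]:
  fixes f :: "'a \<Rightarrow> 'n::finite rvec"
  assumes "(f \<longlongrightarrow> l) F"
  shows "((\<lambda>x. Diag (f x)) \<longlongrightarrow> Diag l) F"
  unfolding Diag_def
proof (intro tendsto_vec_lambda)
  fix i j :: 'n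
  show "((\<lambda>x. if i = j then f x $ i else 0) \<longlongrightarrow> (if i = j then l $ i else 0)) F"
    by (cases "i = j") (simp_all add: tendsto_vec_nth assms)
qed

lemma norm_matrix_mult_orthogonal_right:
  fixes Q A :: "real^'n^'n"
  assumes "orthogonal_matrix Q"
  shows "norm (A ** Q) = norm A"
proof -
  have "orthogonal_transformation (\<lambda>x. transpose Q *v x)"
    using assms by (simp add: orthogonal_transformation_matrix del: transpose_matrix_vector)
  moreover have "(A ** Q) $ i = transpose Q *v (A $ i)" for i
    by (simp add: vec_eq_iff matrix_matrix_mult_def matrix_vector_mult_def transpose_def mult.commute)
  ultimately have "norm ((A ** Q) $ i) = norm (A $ i)" for i
    by (metis orthogonal_transformation_norm)
  then show ?thesis by (simp add: norm_vec_def)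
qed

lemma norm_transpose: "norm (transpose (A :: real^'n^'m)) = norm A"
proof -
  have "(norm (transpose A))\<^sup>2 = (norm A)\<^sup>2"
    by (simp add: power2_norm_eq_inner inner_vec_def transpose_def) (rule sum.swap)
  then show ?thesis by (simp add: power2_eq_iff_nonneg)
qed

lemma norm_matrix_mult_orthogonal_left:
  fixes Q A :: "real^'n^'n"
  assumes "orthogonal_matrix Q"
  shows "norm (Q ** A) = norm A"
  by (metis assms matrix_transpose_mul norm_matrix_mult_orthogonal_right norm_transpose
      orthogonal_matrix_transpose)

lemma norm_Diag: "norm (Diag l) = norm l"
proof -
  have "Diag l $ i = l $ i *\<^sub>R axis i 1" for i
    by (simp add: vec_eq_iff Diag_def axis_def)
  then have "norm (Diag l $ i) = norm (l $ i)" for i by simp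
  then show ?thesis by (simp add: norm_vec_def)
qed

lemma norm_eigvals: "sym_mat X \<Longrightarrow> norm (eigvals X) = norm X"
  by (metis spectral_decomp_exists spectral_decomp_def norm_Diag
      norm_matrix_mult_orthogonal_left norm_matrix_mult_orthogonal_right orthogonal_matrix_transpose)

lemma compact_orthogonal_matrices: "compact {Q :: real^'n^'n. orthogonal_matrix Q}"
  unfolding compact_eq_bounded_closed
proof
  show "bounded {Q :: real^'n^'n. orthogonal_matrix Q}"
    unfolding bounded_iff
    by (metis mem_Collect_eq matrix_mul_rid norm_matrix_mult_orthogonal_left order_refl)
  show "closed {Q :: real^'n^'n. orthogonal_matrix Q}"
    unfolding closed_sequential_limits
  proof (intro allI impI, elim conjE)
    fix Qs and Q :: "real^'n^'n"
    assume orth: "\<forall>n. Qs n \<in> {Q. orthogonal_matrix Q}" and "Qs \<longlonglongrightarrow> Q"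
    then have "(\<lambda>n. transpose (Qs n) ** Qs n) \<longlonglongrightarrow> transpose Q ** Q"
      by (intro tendsto_intros)
    moreover have "(\<lambda>n. transpose (Qs n) ** Qs n) = (\<lambda>n. mat 1)"
      using orth by (simp add: orthogonal_matrix)
    ultimately show "Q \<in> {Q. orthogonal_matrix Q}"
      using LIMSEQ_unique[OF tendsto_const] by (fastforce simp: orthogonal_matrix)
  qed
qed

lemma closed_nonincr: "closed {l :: 'n::{finite,wellorder} rvec. nonincr l}"
proof -
  have "{l :: 'n rvec. nonincr l} = (\<Inter>i. \<Inter>j\<in>{j. i \<le> j}. {l. l $ j \<le> l $ i})"
    by (auto simp: nonincr_def)
  then show ?thesis by (auto intro!: closed_INT closed_Collect_le continuous_intros)
qed

lemma transpose_Diag [simp]: "transpose (Diag l) = Diag l"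
  by (simp add: Diag_def transpose_def vec_eq_iff)

lemma sym_mat_conj_Diag: "sym_mat (Q ** Diag l ** transpose Q)"
  by (simp add: sym_mat_def matrix_transpose_mul matrix_mul_assoc)

lemma Diag_mult: "Diag a ** Diag b = Diag (a * b)"
  unfolding Diag_def matrix_matrix_mult_def
  by (simp add: vec_eq_iff mult_delta_left sum.delta)

lemma Diag_mult_commute: "Diag a ** Diag b = Diag b ** Diag a"
  by (simp add: Diag_mult mult.commute)

lemma spectral_decomp_sign_change:
  assumes "spectral_decomp P X" and "orthogonal_matrix (Diag s)"
  shows "spectral_decomp (P ** Diag s) X"
proof -
  let ?D = "Diag (eigvals X)"
  have "P ** Diag s ** ?D ** transpose (P ** Diag s) = P ** (?D ** (transpose (Diag s) ** Diag s)) ** transpose P"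
    by (simp add: Diag_mult_commute matrix_transpose_mul matrix_mul_assoc)
  also have "\<dots> = X"
    using assms by (simp add: orthogonal_matrix_def spectral_decompD)
  finally show ?thesis
    using spectral_decompD(1)[OF assms(1)] assms(2) by (metis spectral_decompI orthogonal_matrix_mul)
qed

lemma spectral_decomp_unique_up_to_signs:
  assumes P: "spectral_decomp P X" and Q: "spectral_decomp Q X"
    and distinct: "\<forall>i j. i \<noteq> j \<longrightarrow> eigvals X $ i \<noteq> eigvals X $ j"
  obtains s where "orthogonal_matrix (Diag s)" "P = Q ** Diag s"
proof -
  let ?D = "Diag (eigvals X)"
  define R where "R = transpose Q ** P"
  have oP: "orthogonal_matrix P" and oQ: "orthogonal_matrix Q"
    and PQ: "P ** ?D ** transpose P = Q ** ?D ** transpose Q"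
    using spectral_decompD[OF P] spectral_decompD[OF Q] by auto
  have "R ** ?D = transpose Q ** (P ** ?D ** transpose P) ** P"
    using oP by (simp add: R_def matrix_mul_assoc[symmetric] orthogonal_matrix_def)
  also have "\<dots> = ?D ** R"
    using oQ unfolding PQ by (simp add: R_def matrix_mul_assoc orthogonal_matrix_def)
  finally have "R $ i $ j * eigvals X $ j = eigvals X $ i * R $ i $ j" for i j
    by (simp add: vec_eq_iff matrix_matrix_mult_def Diag_def mult_delta_left mult_delta_right
        sum.delta sum.delta')
  then have "R $ i $ j = 0" if "i \<noteq> j" for i j
    using distinct that by (metis mult.commute mult_cancel_left)
  then have "R = Diag (\<chi> i. R $ i $ i)"
    by (auto simp: vec_eq_iff Diag_def)
  moreover have "orthogonal_matrix R"
    using oP oQ by (simp add: R_def orthogonal_matrix_mul)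
  moreover have "P = Q ** R"
    using oQ by (simp add: R_def matrix_mul_assoc orthogonal_matrix_def)
  ultimately show thesis using that by metis
qed

lemma spectral_decomps_subseq_limit:
  fixes X :: "nat \<Rightarrow> 'n::{finite,wellorder} rmat"
  assumes lim: "X \<longlonglongrightarrow> Xs" and P: "\<forall>n. spectral_decomp (P n) (X n)"
  obtains r Pi where "strict_mono r" "spectral_decomp Pi Xs"
    "(\<lambda>n. P (r n)) \<longlonglongrightarrow> Pi" "(\<lambda>n. eigvals (X (r n))) \<longlonglongrightarrow> eigvals Xs"
proof -
  have sym: "sym_mat (X n)" for n
    using spectral_decompD(2)[OF P[rule_format, of n]] sym_mat_conj_Diag by metis
  obtain B where B: "\<forall>n. norm (X n) \<le> B"
    using convergent_imp_Bseq[OF convergentI[OF lim]] unfolding Bseq_def by blast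
  define K where "K = {Q :: 'n rmat. orthogonal_matrix Q} \<times> ({l :: 'n rvec. nonincr l} \<inter> cball 0 B)"
  have "seq_compact K"
    unfolding K_def
    by (intro compact_imp_seq_compact compact_Times compact_orthogonal_matrices closed_Int_compact
        closed_nonincr compact_cball)
  moreover have "\<forall>n. (P n, eigvals (X n)) \<in> K"
    using spectral_decompD(1) P B sym by (simp add: K_def nonincr_eigvals norm_eigvals) blast
  ultimately obtain PL r where "PL \<in> K" "strict_mono r"
    and lim_PL: "((\<lambda>n. (P n, eigvals (X n))) \<circ> r) \<longlonglongrightarrow> PL"
    by (rule seq_compactE)
  obtain Pi Li where PL: "PL = (Pi, Li)" by fastforce
  have PP: "(\<lambda>n. P (r n)) \<longlonglongrightarrow> Pi" and LL: "(\<lambda>n. eigvals (X (r n))) \<longlonglongrightarrow> Li"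
    using tendsto_fst[OF lim_PL] tendsto_snd[OF lim_PL] by (simp_all add: PL o_def)
  have oPi: "orthogonal_matrix Pi" and "nonincr Li"
    using \<open>PL \<in> K\<close> by (simp_all add: PL K_def)
  have "(\<lambda>n. X (r n)) = (\<lambda>n. P (r n) ** Diag (eigvals (X (r n))) ** transpose (P (r n)))"
    using P by (simp add: spectral_decompD)
  then have "(\<lambda>n. X (r n)) \<longlonglongrightarrow> Pi ** Diag Li ** transpose Pi"
    by (simp only:) (intro tendsto_intros PP LL)
  moreover have "(\<lambda>n. X (r n)) \<longlonglongrightarrow> Xs"
    using LIMSEQ_subseq_LIMSEQ[OF lim \<open>strict_mono r\<close>] by (simp add: o_def)
  ultimately have Xs: "Xs = Pi ** Diag Li ** transpose Pi"
    using LIMSEQ_unique by blast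
  then have "Li = eigvals Xs"
    using eigvals_orthogonal_conj[OF oPi \<open>nonincr Li\<close>] by simp
  moreover from this have "spectral_decomp Pi Xs"
    using oPi Xs by (simp add: spectral_decompI)
  ultimately show thesis
    using that[OF \<open>strict_mono r\<close> _ PP] LL by blast
qed

lemma spectral_decomps_converge:
  fixes X :: "nat \<Rightarrow> 'n::{finite,wellorder} rmat"
  assumes sym: "\<forall>n. sym_mat (X n)" and lim: "X \<longlonglongrightarrow> Xs" and Q0: "spectral_decomp Q0 Xs"
    and distinct: "\<forall>i j. i \<noteq> j \<longrightarrow> eigvals Xs $ i \<noteq> eigvals Xs $ j"
  obtains r Q where "strict_mono r" "\<forall>n. spectral_decomp (Q n) (X (r n))"
    "Q \<longlonglongrightarrow> Q0" "(\<lambda>n. eigvals (X (r n))) \<longlonglongrightarrow> eigvals Xs"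
proof -
  have "\<forall>n. \<exists>P. spectral_decomp P (X n)"
    using spectral_decomp_exists sym by metis
  then obtain P where P: "\<forall>n. spectral_decomp (P n) (X n)"
    by metis
  obtain r Pi where "strict_mono r" "spectral_decomp Pi Xs"
    and PP: "(\<lambda>n. P (r n)) \<longlonglongrightarrow> Pi" and LL: "(\<lambda>n. eigvals (X (r n))) \<longlonglongrightarrow> eigvals Xs"
    using spectral_decomps_subseq_limit[OF lim P] by blast
  then obtain s where s: "orthogonal_matrix (Diag s)" "Q0 = Pi ** Diag s"
    using spectral_decomp_unique_up_to_signs[OF Q0 _ distinct] by blast
  show thesis
  proof (rule that[OF \<open>strict_mono r\<close> _ _ LL])
    show "\<forall>n. spectral_decomp (P (r n) ** Diag s) (X (r n))"
      using P s(1) spectral_decomp_sign_change by blast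
    show "(\<lambda>n. P (r n) ** Diag s) \<longlonglongrightarrow> Q0"
      unfolding s(2) by (intro tendsto_intros PP)
  qed
qed

lemma spectral_decomp_near:
  fixes Xs :: "'n::{finite,wellorder} rmat"
  assumes Q0: "spectral_decomp Q0 Xs"
    and distinct: "\<forall>i j. i \<noteq> j \<longrightarrow> eigvals Xs $ i \<noteq> eigvals Xs $ j"
    and "e > 0"
  obtains d where "d > 0" "\<forall>X. sym_mat X \<and> norm (X - Xs) \<le> d \<longrightarrow>
    (\<exists>Q. spectral_decomp Q X \<and> norm (Q - Q0) \<le> e \<and> norm (eigvals X - eigvals Xs) \<le> e)"
proof -
  let ?near = "\<lambda>X. \<exists>Q. spectral_decomp Q X \<and> norm (Q - Q0) \<le> e \<and> norm (eigvals X - eigvals Xs) \<le> e"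
  have "\<exists>d>0. \<forall>X. sym_mat X \<and> norm (X - Xs) \<le> d \<longrightarrow> ?near X"
  proof (rule ccontr)
    assume "\<not> ?thesis"
    then have "\<exists>X. sym_mat X \<and> norm (X - Xs) \<le> inverse (real (Suc n)) \<and> \<not> ?near X" for n
      by (meson inverse_positive_iff_positive of_nat_0_less_iff zero_less_Suc)
    then obtain X where X: "\<forall>n. sym_mat (X n) \<and> norm (X n - Xs) \<le> inverse (real (Suc n)) \<and> \<not> ?near (X n)"
      by metis
    have "X \<longlonglongrightarrow> Xs"
      unfolding Lim_null[of X Xs]
      by (rule Lim_null_comparison[OF always_eventually LIMSEQ_inverse_real_of_nat]) (use X in auto)
    with X obtain r Q where Q: "\<forall>n. spectral_decomp (Q n) (X (r n))"
      and lim_Q: "Q \<longlonglongrightarrow> Q0" and lim_eig: "(\<lambda>n. eigvals (X (r n))) \<longlonglongrightarrow> eigvals Xs"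
      using spectral_decomps_converge[OF _ _ Q0 distinct] by blast
    obtain N1 N2 where "\<forall>n\<ge>N1. norm (Q n - Q0) < e"
      and "\<forall>n\<ge>N2. norm (eigvals (X (r n)) - eigvals Xs) < e"
      using LIMSEQ_D[OF lim_Q \<open>e > 0\<close>] LIMSEQ_D[OF lim_eig \<open>e > 0\<close>] by blast
    then have "?near (X (r (max N1 N2)))"
      using Q by (meson less_imp_le max.cobounded1 max.cobounded2)
    then show False using X by blast
  qed
  then show thesis using that by blast
qed

section \<open>Local minima of the two problems\<close>

lemma conj_Diag_eps_delta:
  fixes Q0 :: "real^'n^'n"
  assumes "e > 0"
  obtains d where "d > 0" "\<forall>Q l. norm (Q - Q0) \<le> d \<and> norm (l - l0) \<le> d \<longrightarrow>
    norm (Q ** Diag l ** transpose Q - Q0 ** Diag l0 ** transpose Q0) \<le> e"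
proof -
  let ?f = "\<lambda>(Q, l). Q ** Diag l ** transpose Q"
  have "?f \<midarrow>(Q0, l0)\<rightarrow> ?f (Q0, l0)"
    unfolding case_prod_unfold by (intro tendsto_intros tendsto_ident_at)
  then obtain d where "d > 0"
    and d: "\<forall>x. x \<noteq> (Q0, l0) \<and> norm (x - (Q0, l0)) < d \<longrightarrow> norm (?f x - ?f (Q0, l0)) < e"
    using LIM_D \<open>e > 0\<close> by blast
  have "norm (Q ** Diag l ** transpose Q - Q0 ** Diag l0 ** transpose Q0) \<le> e"
    if "norm (Q - Q0) \<le> d / 3" "norm (l - l0) \<le> d / 3" for Q l
  proof (cases "(Q, l) = (Q0, l0)")
    case False
    have "norm ((Q, l) - (Q0, l0)) \<le> norm (Q - Q0) + norm (l - l0)"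
      using norm_Pair_le by simp
    also have "\<dots> < d" using that \<open>d > 0\<close> by simp
    finally show ?thesis using d False by fastforce
  qed (use \<open>e > 0\<close> in simp)
  then show thesis using that \<open>d > 0\<close> by (metis zero_less_divide_iff zero_less_numeral)
qed

lemma feas2_imp_feas1: "(Q, l) \<in> feas2 G C \<Longrightarrow> Q ** Diag l ** transpose Q \<in> feas1 G C"
  by (simp add: feas2_def feas1_def sym_mat_conj_Diag eigvals_orthogonal_conj)

lemma spectral_decomp_feas2:
  "spectral_decomp Q X \<Longrightarrow> X \<in> feas1 G C \<Longrightarrow> (Q, eigvals X) \<in> feas2 G C"
  by (auto simp: feas1_def feas2_def spectral_decompD nonincr_eigvals)

lemma local_min_P1_imp_P2:
  assumes "local_min_P1 F G C Xs" and Q: "spectral_decomp Q Xs"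
  shows "local_min_P2 F G C Q (eigvals Xs)"
proof -
  obtain d1 where "Xs \<in> feas1 G C" "d1 > 0" and d1: "\<forall>X\<in>feas1 G C. norm (X - Xs) \<le> d1 \<longrightarrow> F Xs \<le> F X"
    using assms(1) unfolding local_min_P1_def by blast
  have Xs: "Q ** Diag (eigvals Xs) ** transpose Q = Xs"
    using Q by (simp add: spectral_decompD)
  obtain d2 where "d2 > 0" and d2: "\<forall>Q' l. norm (Q' - Q) \<le> d2 \<and> norm (l - eigvals Xs) \<le> d2 \<longrightarrow>
      norm (Q' ** Diag l ** transpose Q' - Xs) \<le> d1"
    using conj_Diag_eps_delta[OF \<open>d1 > 0\<close>, of Q "eigvals Xs"] unfolding Xs by blast
  have "(Q, eigvals Xs) \<in> feas2 G C"
    using spectral_decomp_feas2[OF Q \<open>Xs \<in> feas1 G C\<close>] .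
  moreover have "F (Q ** Diag (eigvals Xs) ** transpose Q) \<le> F (Q' ** Diag l ** transpose Q')"
    if "(Q', l) \<in> feas2 G C" "norm (Q' - Q) \<le> d2" "norm (l - eigvals Xs) \<le> d2" for Q' l
    using d1 d2 feas2_imp_feas1[OF that(1)] that(2,3) unfolding Xs by blast
  ultimately show ?thesis
    unfolding local_min_P2_def using \<open>d2 > 0\<close> by blast
qed

lemma local_min_P2_imp_P1:
  assumes distinct: "\<forall>i j. i \<noteq> j \<longrightarrow> eigvals Xs $ i \<noteq> eigvals Xs $ j"
    and Q0: "spectral_decomp Q0 Xs" and "local_min_P2 F G C Q0 (eigvals Xs)"
  shows "local_min_P1 F G C Xs"
proof -
  obtain d2 where "(Q0, eigvals Xs) \<in> feas2 G C" "d2 > 0"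
    and d2: "\<forall>(Q, l)\<in>feas2 G C. norm (Q - Q0) \<le> d2 \<and> norm (l - eigvals Xs) \<le> d2 \<longrightarrow>
        F (Q0 ** Diag (eigvals Xs) ** transpose Q0) \<le> F (Q ** Diag l ** transpose Q)"
    using assms(3) unfolding local_min_P2_def by blast
  have Xs: "Q0 ** Diag (eigvals Xs) ** transpose Q0 = Xs"
    using Q0 by (simp add: spectral_decompD)
  obtain d where "d > 0" and d: "\<forall>X. sym_mat X \<and> norm (X - Xs) \<le> d \<longrightarrow>
      (\<exists>Q. spectral_decomp Q X \<and> norm (Q - Q0) \<le> d2 \<and> norm (eigvals X - eigvals Xs) \<le> d2)"
    using spectral_decomp_near[OF Q0 distinct \<open>d2 > 0\<close>] by blast
  have "Xs \<in> feas1 G C"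
    using feas2_imp_feas1[OF \<open>(Q0, eigvals Xs) \<in> feas2 G C\<close>] unfolding Xs .
  moreover have "F Xs \<le> F X" if X: "X \<in> feas1 G C" "norm (X - Xs) \<le> d" for X
  proof -
    obtain Q where Q: "spectral_decomp Q X" "norm (Q - Q0) \<le> d2" "norm (eigvals X - eigvals Xs) \<le> d2"
      using d X by (auto simp: feas1_def)
    then have "F Xs \<le> F (Q ** Diag (eigvals X) ** transpose Q)"
      using d2 spectral_decomp_feas2[OF Q(1) X(1)] unfolding Xs by blast
    then show ?thesis using Q(1) by (simp add: spectral_decompD)
  qed
  ultimately show ?thesis
    unfolding local_min_P1_def using \<open>d > 0\<close> by blast
qed

theorem theorem1:
  fixes F :: "'n::{finite,wellorder} rmat \<Rightarrow> real"
    and G :: "'n rmat \<Rightarrow> 'q::finite rvec"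
    and C :: "('n rvec) set"
    and Xs :: "'n rmat"
  assumes "closed C"
    and "sym_mat Xs"
    and "\<forall>i j. i \<noteq> j \<longrightarrow> eigvals Xs $ i \<noteq> eigvals Xs $ j"
  shows "(local_min_P1 F G C Xs \<longleftrightarrow>
            (\<exists>Q. spectral_decomp Q Xs \<and> local_min_P2 F G C Q (eigvals Xs)))
       \<and> ((\<exists>Q. spectral_decomp Q Xs \<and> local_min_P2 F G C Q (eigvals Xs)) \<longrightarrow>
            (\<forall>Q. spectral_decomp Q Xs \<longrightarrow> local_min_P2 F G C Q (eigvals Xs)))"
proof -
  obtain Q0 where "spectral_decomp Q0 Xs"
    using spectral_decomp_exists[OF assms(2)] .
  then show ?thesis
    using local_min_P1_imp_P2 local_min_P2_imp_P1[OF assms(3)] by blast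
qed

end
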